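(* Let $G$ be a co-bipartite graph whose vertex set is partitioned into cliques $A$ and $B$ with $|A|=n_1$ and $|B|=n_2$. Suppose there is a numbering of the vertices, $A=\{1,\dots,n_1\}$ and $B=\{1',\dots,n_2'\}$, which satisfies the Bi-Consecutive Adjacency Property. Then $G$ is a circular arc graph.
   Context: A circular arc graph is the intersection graph of a finite family of arcs of a circle. Bi-Consecutive Adjacency Property: given a partition $V(G)=A\cup B$ with vertices of $A$ numbered $1,\dots,n_1$ and vertices of $B$ numbered $1',\dots,n_2'$, the numbering satisfies the property if for every $i\in A$ and $j'\in B$ with $i$ adjacent to $j'$, either (a) $j'$ is adjacent to every $k\in A$ with $1\le k\le i$, or (b) $i$ is adjacent to every $k'\in B$ with $1'\le k'\le j'$. *)

theory Defs
  imports Complex_Main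
begin

definition simple_graph :: "'v set \<Rightarrow> ('v \<Rightarrow> 'v \<Rightarrow> bool) \<Rightarrow> bool" where
  "simple_graph V E \<longleftrightarrow> finite V \<and>
     (\<forall>u v. E u v \<longrightarrow> u \<in> V \<and> v \<in> V \<and> u \<noteq> v) \<and>
     (\<forall>u v. E u v \<longrightarrow> E v u)"

definition clique :: "('v \<Rightarrow> 'v \<Rightarrow> bool) \<Rightarrow> 'v set \<Rightarrow> bool" where
  "clique E S \<longleftrightarrow> (\<forall>u\<in>S. \<forall>v\<in>S. u \<noteq> v \<longrightarrow> E u v)"

definition cobipartite_partition ::
  "'v set \<Rightarrow> ('v \<Rightarrow> 'v \<Rightarrow> bool) \<Rightarrow> 'v set \<Rightarrow> 'v set \<Rightarrow> bool" where
  "cobipartite_partition V E A B \<longleftrightarrow>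
     V = A \<union> B \<and> A \<inter> B = {} \<and> clique E A \<and> clique E B"

definition arc :: "real \<Rightarrow> real \<Rightarrow> complex set" where
  "arc s l = {cis t | t. s \<le> t \<and> t \<le> s + l}"

definition is_arc :: "complex set \<Rightarrow> bool" where
  "is_arc X \<longleftrightarrow> (\<exists>s l. 0 \<le> l \<and> l < 2 * pi \<and> X = arc s l)"

definition circular_arc_graph :: "'v set \<Rightarrow> ('v \<Rightarrow> 'v \<Rightarrow> bool) \<Rightarrow> bool" where
  "circular_arc_graph V E \<longleftrightarrow>
     (\<exists>f :: 'v \<Rightarrow> complex set. (\<forall>v\<in>V. is_arc (f v)) \<and>
        (\<forall>u\<in>V. \<forall>v\<in>V. u \<noteq> v \<longrightarrow> (E u v \<longleftrightarrow> f u \<inter> f v \<noteq> {})))"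

text \<open>Bi-Consecutive Adjacency Property for numberings \<alpha> : {1..n1} \<rightarrow> A (vertex i),
  \<beta> : {1..n2} \<rightarrow> B (vertex j').\<close>
definition bi_consecutive_adjacency ::
  "('v \<Rightarrow> 'v \<Rightarrow> bool) \<Rightarrow> nat \<Rightarrow> (nat \<Rightarrow> 'v) \<Rightarrow> nat \<Rightarrow> (nat \<Rightarrow> 'v) \<Rightarrow> bool" where
  "bi_consecutive_adjacency E n1 \<alpha> n2 \<beta> \<longleftrightarrow>
     (\<forall>i\<in>{1..n1}. \<forall>j\<in>{1..n2}. E (\<alpha> i) (\<beta> j) \<longrightarrow>
        (\<forall>k\<in>{1..i}. E (\<beta> j) (\<alpha> k)) \<or> (\<forall>k\<in>{1..j}. E (\<alpha> i) (\<beta> k)))"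

end

theory Submission imports Defs begin

text \<open>Put the vertices \<open>1, \<dots>, n\<^sub>1\<close> of \<open>A\<close> in increasing order on the lower half of the
  circle and the vertices \<open>1', \<dots>, n\<^sub>2'\<close> of \<open>B\<close> in increasing order on the upper half.
  The property says that \<open>i\<close> and \<open>j'\<close> are adjacent iff \<open>j \<le> a(i)\<close> or \<open>i \<le> b(j)\<close>, where
  \<open>a(i)\<close> is the length of the longest initial segment of \<open>B\<close> adjacent to \<open>i\<close> and \<open>b(j)\<close>
  the length of the longest initial segment of \<open>A\<close> adjacent to \<open>j'\<close>. The arc of \<open>i\<close> runs
  counterclockwise from \<open>i\<close> through the point \<open>1\<close> to just after \<open>a(i)'\<close>, the arc of \<open>j'\<close>
  from \<open>j'\<close> through \<open>-1\<close> to just after \<open>b(j)\<close>. These arcs meet on the upper half iff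
  \<open>j \<le> a(i)\<close> and on the lower half iff \<open>i \<le> b(j)\<close>; arcs of the same side share \<open>1\<close>
  or \<open>-1\<close>, as the two sides are cliques.\<close>

definition longest_prefix :: "nat \<Rightarrow> (nat \<Rightarrow> bool) \<Rightarrow> nat" where
  "longest_prefix n P = Max {j \<in> {0..n}. \<forall>k\<in>{1..j}. P k}"

lemma longest_prefix_mem: "longest_prefix n P \<in> {j \<in> {0..n}. \<forall>k\<in>{1..j}. P k}"
  unfolding longest_prefix_def by (rule Max_in) auto

lemma longest_prefix_le: "longest_prefix n P \<le> n"
  using longest_prefix_mem by auto

lemma le_longest_prefix_iff:
  assumes "m \<le> n"
  shows "m \<le> longest_prefix n P \<longleftrightarrow> (\<forall>k\<in>{1..m}. P k)"
proof
  assume "m \<le> longest_prefix n P"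
  then show "\<forall>k\<in>{1..m}. P k"
    using longest_prefix_mem[of n P] by auto
next
  assume "\<forall>k\<in>{1..m}. P k"
  with assms show "m \<le> longest_prefix n P"
    unfolding longest_prefix_def by (auto intro!: Max_ge)
qed

lemma bi_consecutive_adjacency_iff_longest_prefix:
  assumes sym: "\<And>u v. E u v \<Longrightarrow> E v u"
    and bca: "bi_consecutive_adjacency E n1 \<alpha> n2 \<beta>"
    and i: "i \<in> {1..n1}" and j: "j \<in> {1..n2}"
  shows "E (\<alpha> i) (\<beta> j) \<longleftrightarrow>
    j \<le> longest_prefix n2 (\<lambda>k. E (\<alpha> i) (\<beta> k)) \<or> i \<le> longest_prefix n1 (\<lambda>k. E (\<beta> j) (\<alpha> k))"
proof -
  have "E (\<alpha> i) (\<beta> j) \<longleftrightarrow> (\<forall>k\<in>{1..j}. E (\<alpha> i) (\<beta> k)) \<or> (\<forall>k\<in>{1..i}. E (\<beta> j) (\<alpha> k))"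
    using bca i j sym unfolding bi_consecutive_adjacency_def by (meson atLeastAtMost_iff order_refl)
  with i j show ?thesis
    by (simp add: le_longest_prefix_iff)
qed

lemma cis_eq_cis_iff: "cis s = cis t \<longleftrightarrow> (\<exists>n::int. s = t + 2 * pi * n)"
  unfolding sin_cos_eq_iff[symmetric] complex_eq_iff by auto

text \<open>An arc starting at \<open>p\<close> in the lower half and wrapping past \<open>2\<pi>\<close> to \<open>x\<close> in the upper
  half, against an arc from \<open>y\<close> in the upper half to \<open>q\<close> in the lower half.\<close>
lemma arc_wrapping_meet_iff:
  assumes "0 < p" "p \<le> 2 * pi" "0 \<le> x" "x < pi" "0 < y" "y \<le> q" "q < 2 * pi"
  shows "arc p (2 * pi + x - p) \<inter> arc y (q - y) \<noteq> {} \<longleftrightarrow> p \<le> q \<or> y \<le> x"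
proof
  assume "arc p (2 * pi + x - p) \<inter> arc y (q - y) \<noteq> {}"
  then obtain t t' where t: "p \<le> t" "t \<le> 2 * pi + x" and t': "y \<le> t'" "t' \<le> q"
    and "cis t = cis t'"
    unfolding arc_def by auto
  then obtain n :: int where n: "t = t' + 2 * pi * n"
    using cis_eq_cis_iff by blast
  have "pi * (-1) < pi * of_int n" "pi * of_int n < pi * 2"
    using assms t t' n by linarith+
  then have "n = 0 \<or> n = 1"
    by (simp only: mult_less_cancel_left_pos[OF pi_gt_zero]) linarith
  then show "p \<le> q \<or> y \<le> x"
    using n t t' by auto
next
  assume "p \<le> q \<or> y \<le> x"
  then obtain t where "t \<in> {p..2 * pi + x}" "cis t \<in> arc y (q - y)"
  proof
    assume "p \<le> q"
    then show thesis
      using assms by (intro that[of "max p y"]) (auto simp: arc_def)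
  next
    assume "y \<le> x"
    moreover have "cis (y + 2 * pi) = cis y"
      by (simp flip: cis_mult)
    ultimately show thesis
      using assms by (intro that[of "y + 2 * pi"]) (auto simp: arc_def)
  qed
  then show "arc p (2 * pi + x - p) \<inter> arc y (q - y) \<noteq> {}"
    by (auto simp: arc_def)
qed

lemma pi_fraction_less_pi: "x < real n + 1 \<Longrightarrow> pi * x / (real n + 1) < pi"
  by (simp add: pos_divide_less_eq)

lemma pi_fraction_le_pi: "x \<le> real n + 1 \<Longrightarrow> pi * x / (real n + 1) \<le> pi"
  by (simp add: pos_divide_le_eq)

lemma pi_fraction_le_cancel:
  "pi * real j / (real n + 1) \<le> pi * (real m + 1/2) / (real n + 1) \<longleftrightarrow> j \<le> m"
  by (simp add: divide_le_cancel) linarith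

lemma threshold_adjacency_arc_model:
  fixes a b :: "nat \<Rightarrow> nat"
  assumes a: "\<And>i. a i \<le> n2" and b: "\<And>j. b j \<le> n1"
  obtains fa fb :: "nat \<Rightarrow> complex set" where
    "\<And>i. i \<in> {1..n1} \<Longrightarrow> is_arc (fa i) \<and> 1 \<in> fa i"
    "\<And>j. j \<in> {1..n2} \<Longrightarrow> is_arc (fb j) \<and> -1 \<in> fb j"
    "\<And>i j. i \<in> {1..n1} \<Longrightarrow> j \<in> {1..n2} \<Longrightarrow> fa i \<inter> fb j \<noteq> {} \<longleftrightarrow> j \<le> a i \<or> i \<le> b j"
proof -
  define p where "p i = pi + pi * real i / (real n1 + 1)" for i
  define x where "x i = pi * (real (a i) + 1/2) / (real n2 + 1)" for i
  define y where "y j = pi * real j / (real n2 + 1)" for j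
  define q where "q j = pi + pi * (real (b j) + 1/2) / (real n1 + 1)" for j
  have p: "pi \<le> p i" "p i \<le> 2 * pi" if "i \<le> n1" for i
    using that pi_fraction_le_pi[of "real i" n1] by (auto simp: p_def)
  have x: "0 \<le> x i" "x i < pi" for i
    using a[of i] pi_fraction_less_pi[of "real (a i) + 1/2" n2] by (auto simp: x_def)
  have y: "0 < y j" "y j \<le> pi" if "j \<in> {1..n2}" for j
    using that pi_fraction_le_pi[of "real j" n2] by (auto simp: y_def)
  have q: "pi < q j" "q j < 2 * pi" for j
    using b[of j] pi_fraction_less_pi[of "real (b j) + 1/2" n1] by (auto simp: q_def)
  define fa where "fa i = arc (p i) (2 * pi + x i - p i)" for i
  define fb where "fb j = arc (y j) (q j - y j)" for j
  have "is_arc (fa i)" "1 \<in> fa i" if "i \<in> {1..n1}" for i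
  proof -
    show "is_arc (fa i)"
      using that p[of i] x[of i] unfolding is_arc_def fa_def
      by (intro exI[of _ "p i"] exI[of _ "2 * pi + x i - p i"]) auto
    have "cis (2 * pi) \<in> fa i"
      using that p[of i] x[of i] unfolding fa_def arc_def by (intro CollectI exI[of _ "2 * pi"]) auto
    then show "1 \<in> fa i"
      by simp
  qed
  moreover have "is_arc (fb j)" "-1 \<in> fb j" if "j \<in> {1..n2}" for j
  proof -
    show "is_arc (fb j)"
      using y[OF that] q[of j] unfolding is_arc_def fb_def
      by (intro exI[of _ "y j"] exI[of _ "q j - y j"]) auto
    have "cis pi \<in> fb j"
      using y[OF that] q[of j] unfolding fb_def arc_def by (intro CollectI exI[of _ pi]) auto
    then show "-1 \<in> fb j"
      by simp
  qed
  moreover have "fa i \<inter> fb j \<noteq> {} \<longleftrightarrow> j \<le> a i \<or> i \<le> b j"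
    if "i \<in> {1..n1}" "j \<in> {1..n2}" for i j
  proof -
    have "p i \<le> q j \<longleftrightarrow> i \<le> b j" "y j \<le> x i \<longleftrightarrow> j \<le> a i"
      unfolding p_def q_def x_def y_def by (simp_all add: pi_fraction_le_cancel)
    moreover have "0 < p i"
      using p(1)[of i] that(1) pi_gt_zero by (meson atLeastAtMost_iff less_le_trans)
    ultimately show ?thesis
      using that p[of i] x[of i] y[of j] q[of j] unfolding fa_def fb_def
      by (subst arc_wrapping_meet_iff) auto
  qed
  ultimately show thesis
    using that[of fa fb] by blast
qed

lemma cobipartite_circular_arc_graphI:
  assumes graph: "simple_graph V E" and partition: "cobipartite_partition V E A B"
    and arcs_A: "\<And>u. u \<in> A \<Longrightarrow> is_arc (f u) \<and> z \<in> f u"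
    and arcs_B: "\<And>v. v \<in> B \<Longrightarrow> is_arc (f v) \<and> w \<in> f v"
    and cross: "\<And>u v. u \<in> A \<Longrightarrow> v \<in> B \<Longrightarrow> E u v \<longleftrightarrow> f u \<inter> f v \<noteq> {}"
  shows "circular_arc_graph V E"
  unfolding circular_arc_graph_def
proof (intro exI[of _ f] conjI ballI impI)
  have V: "V = A \<union> B" and cliques: "clique E A" "clique E B"
    using partition by (simp_all add: cobipartite_partition_def)
  show "is_arc (f v)" if "v \<in> V" for v
    using that arcs_A arcs_B V by blast
  show "E u v \<longleftrightarrow> f u \<inter> f v \<noteq> {}" if "u \<in> V" "v \<in> V" "u \<noteq> v" for u v
  proof -
    consider "u \<in> A" "v \<in> A" | "u \<in> A" "v \<in> B" | "u \<in> B" "v \<in> A" | "u \<in> B" "v \<in> B"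
      using \<open>u \<in> V\<close> \<open>v \<in> V\<close> V by blast
    then show ?thesis
    proof cases
      case 1
      then show ?thesis
        using cliques arcs_A \<open>u \<noteq> v\<close> unfolding clique_def by blast
    next
      case 2
      then show ?thesis
        by (rule cross)
    next
      case 3
      have "E u v \<longleftrightarrow> E v u"
        using graph by (auto simp: simple_graph_def)
      then show ?thesis
        using cross[OF 3(2,1)] by blast
    next
      case 4
      then show ?thesis
        using cliques arcs_B \<open>u \<noteq> v\<close> unfolding clique_def by blast
    qed
  qed
qed

theorem lemma3:
  fixes V A B :: "'v set" and E :: "'v \<Rightarrow> 'v \<Rightarrow> bool"
    and n1 n2 :: nat and \<alpha> \<beta> :: "nat \<Rightarrow> 'v"
  assumes "simple_graph V E"
    and "cobipartite_partition V E A B"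
    and "bij_betw \<alpha> {1..n1} A"
    and "bij_betw \<beta> {1..n2} B"
    and "bi_consecutive_adjacency E n1 \<alpha> n2 \<beta>"
  shows "circular_arc_graph V E"
proof -
  define a where "a i = longest_prefix n2 (\<lambda>k. E (\<alpha> i) (\<beta> k))" for i
  define b where "b j = longest_prefix n1 (\<lambda>k. E (\<beta> j) (\<alpha> k))" for j
  obtain fa fb where fa: "\<And>i. i \<in> {1..n1} \<Longrightarrow> is_arc (fa i) \<and> 1 \<in> fa i"
    and fb: "\<And>j. j \<in> {1..n2} \<Longrightarrow> is_arc (fb j) \<and> -1 \<in> fb j"
    and meet: "\<And>i j. i \<in> {1..n1} \<Longrightarrow> j \<in> {1..n2} \<Longrightarrow> fa i \<inter> fb j \<noteq> {} \<longleftrightarrow> j \<le> a i \<or> i \<le> b j"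
    using threshold_adjacency_arc_model[of a n2 b n1] unfolding a_def b_def
    by (metis longest_prefix_le)
  have sym: "\<And>u v. E u v \<Longrightarrow> E v u"
    using assms(1) by (simp add: simple_graph_def)
  define f where "f u = (if u \<in> A then fa (inv_into {1..n1} \<alpha> u) else fb (inv_into {1..n2} \<beta> u))" for u
  have "A \<inter> B = {}"
    using assms(2) by (simp add: cobipartite_partition_def)
  with assms(3,4) have A: "u \<in> A \<Longrightarrow> \<exists>i\<in>{1..n1}. u = \<alpha> i \<and> f u = fa i"
    and B: "v \<in> B \<Longrightarrow> \<exists>j\<in>{1..n2}. v = \<beta> j \<and> f v = fb j" for u v
    by (auto simp: f_def bij_betw_def)
  show ?thesis
  proof (rule cobipartite_circular_arc_graphI[OF assms(1,2)])
    show "is_arc (f u) \<and> 1 \<in> f u" if "u \<in> A" for u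
      using A[OF that] fa by auto
    show "is_arc (f v) \<and> -1 \<in> f v" if "v \<in> B" for v
      using B[OF that] fb by auto
    show "E u v \<longleftrightarrow> f u \<inter> f v \<noteq> {}" if "u \<in> A" "v \<in> B" for u v
      using A[OF that(1)] B[OF that(2)] meet
        bi_consecutive_adjacency_iff_longest_prefix[OF sym assms(5)]
      unfolding a_def b_def by metis
  qed
qed

end
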